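(* Let $p=2$, $M=\mathbb{F}_2[x_1,\dots,x_N]/(x_1^2-x_1,\dots,x_N^2-x_N)$, and $1\le k\le N$. Let $\{f_I\}$ be a family of elements of $M$ indexed by the $k$-subsets $I$ of $[N]$, such that for every such $I$, $\deg\big(f_I-\prod_{i\in I}x_i\big)\le k-1$. Let $J$ be the ideal of $M$ generated by the $f_I$. Then $$\dim_{\mathbb{F}_2}(M/J)\le\sum_{j=0}^{k-1}\binom{N}{j}.$$
   Context: The degree of an element of $M$ is the degree of its unique multilinear representative. *)

theory Defs
  imports Complex_Main "HOL-Library.Z2" "HOL-Library.Function_Algebras"
begin

text \<open>Elements of M = F_2[x_1..x_N]/(x_i^2 - x_i) are represented by their unique
multilinear representative: a coefficient function on monomials, a monomial being the
set of variable indices occurring in it (a subset of {1..N}).\<close>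

type_synonym mlpoly = "nat set \<Rightarrow> bit"

definition Mspace :: "nat \<Rightarrow> mlpoly set" where
  "Mspace N = {f. \<forall>S. f S \<noteq> 0 \<longrightarrow> S \<subseteq> {1..N}}"

definition mmono :: "nat set \<Rightarrow> mlpoly" where
  "mmono I = (\<lambda>S. if S = I then 1 else 0)"

text \<open>Multiplication in M: x_A * x_B = x_(A union B) since x_i^2 = x_i.\<close>
definition mmult :: "mlpoly \<Rightarrow> mlpoly \<Rightarrow> mlpoly" where
  "mmult f g = (\<lambda>S. \<Sum>A\<in>Pow S. \<Sum>B\<in>Pow S. if A \<union> B = S then f A * g B else 0)"

definition mdeg :: "mlpoly \<Rightarrow> nat" where
  "mdeg f = (if f = 0 then 0 else Max (card ` {S. f S \<noteq> 0}))"

definition gen_ideal :: "nat \<Rightarrow> 'i set \<Rightarrow> ('i \<Rightarrow> mlpoly) \<Rightarrow> mlpoly set" where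
  "gen_ideal N Ix f = {(\<Sum>I\<in>Ix. mmult (g I) (f I)) | g. \<forall>I\<in>Ix. g I \<in> Mspace N}"

definition mscale :: "bit \<Rightarrow> mlpoly \<Rightarrow> mlpoly" where
  "mscale c f = (\<lambda>S. c * f S)"

text \<open>dim_{F_2}(M/J) = dim M - dim J (both finite-dimensional).\<close>
definition quot_dim :: "mlpoly set \<Rightarrow> mlpoly set \<Rightarrow> nat" where
  "quot_dim V W = vector_space.dim mscale V - vector_space.dim mscale W"

end

theory Submission
  imports Defs
begin

text \<open>For every monomial \<open>x\<^sub>S\<close> of degree at least \<open>k\<close> choose a \<open>k\<close>-subset \<open>I \<subseteq> S\<close>; then
\<open>x\<^bsub>S - I\<^esub> f\<^sub>I \<in> J\<close> equals \<open>x\<^sub>S\<close> plus monomials of smaller degree.  These elements are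
triangular with respect to the degree, hence linearly independent, so \<open>dim J\<close> is at least the
number of subsets of \<open>[N]\<close> of size \<open>\<ge> k\<close>.  Since \<open>dim M \<le> 2\<^sup>N\<close>, the quotient has dimension at
most the number of subsets of size \<open>< k\<close>.\<close>

interpretation mlpoly: vector_space mscale
  by unfold_locales (auto simp: mscale_def fun_eq_iff algebra_simps)

lemma (in vector_space) independent_card_le_dim_of_finite_span:
  assumes "B \<subseteq> V" "independent B" "V \<subseteq> span W" "finite W"
  shows "card B \<le> dim V"
proof -
  obtain A where A: "B \<subseteq> A" "A \<subseteq> V" "independent A" "V \<subseteq> span A"
    using maximal_independent_subset_extend[OF assms(1,2)] by blast
  then have "finite A"
    using independent_span_bound[OF assms(4) \<open>independent A\<close>] assms(3) by auto
  with A show ?thesis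
    by (metis basis_card_eq_dim card_mono)
qed

lemma sum_fun_apply: "(\<Sum>i\<in>A. g i) x = (\<Sum>i\<in>A. g i x)"
  for g :: "'i \<Rightarrow> 'a \<Rightarrow> 'b::comm_monoid_add"
  by (induction A rule: infinite_finite_induct) auto

lemma mmult_zero_left [simp]: "mmult 0 g = 0"
  unfolding mmult_def zero_fun_def by (simp only: mult_zero_left if_cancel sum.neutral_const)

lemma mmult_add_right: "mmult a (b + c) = mmult a b + mmult a c"
proof -
  have if_add: "(if P then x + y else 0) = (if P then x else 0) + (if P then y else 0)"
    for P and x y :: bit
    by simp
  show ?thesis
    unfolding mmult_def plus_fun_def by (simp only: distrib_left if_add sum.distrib)
qed

lemma mmult_nonzeroE:
  assumes "mmult a b T \<noteq> 0"
  obtains A B where "a A \<noteq> 0" "b B \<noteq> 0" "A \<union> B = T"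
proof -
  obtain A where "(\<Sum>B\<in>Pow T. if A \<union> B = T then a A * b B else 0) \<noteq> 0"
    using assms unfolding mmult_def by (meson sum.not_neutral_contains_not_neutral)
  then obtain B where "(if A \<union> B = T then a A * b B else 0) \<noteq> 0"
    using sum.not_neutral_contains_not_neutral by blast
  then show thesis
    using that by (auto split: if_splits)
qed

lemma mmult_mmono:
  assumes "finite A" "finite B"
  shows "mmult (mmono A) (mmono B) = mmono (A \<union> B)"
proof
  fix S
  show "mmult (mmono A) (mmono B) S = mmono (A \<union> B) S"
  proof (cases "finite S")
    case True
    have summand: "(if A' \<union> B' = S then mmono A A' * mmono B B' else 0)
        = (if A' = A then if B' = B then mmono S (A \<union> B) else 0 else 0)" for A' B'
      by (auto simp: mmono_def)
    have "mmult (mmono A) (mmono B) S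
        = (\<Sum>A'\<in>Pow S. if A' = A then \<Sum>B'\<in>Pow S. if B' = B then mmono S (A \<union> B) else 0 else 0)"
      unfolding mmult_def summand by (intro sum.cong refl) auto
    also have "\<dots> = (if A \<in> Pow S then if B \<in> Pow S then mmono S (A \<union> B) else 0 else 0)"
      using True by (simp only: sum.delta finite_Pow_iff)
    also have "\<dots> = mmono (A \<union> B) S"
      by (auto simp: mmono_def)
    finally show ?thesis .
  qed (use assms in \<open>auto simp: mmult_def mmono_def\<close>)
qed

lemma finite_support_Mspace: "f \<in> Mspace N \<Longrightarrow> finite {S. f S \<noteq> 0}"
  unfolding Mspace_def by (rule finite_subset[of _ "Pow {1..N}"]) auto

lemma mmono_in_Mspace: "I \<subseteq> {1..N} \<Longrightarrow> mmono I \<in> Mspace N"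
  by (auto simp: Mspace_def mmono_def)

lemma diff_in_Mspace:
  assumes "f \<in> Mspace N" "g \<in> Mspace N"
  shows "f - g \<in> Mspace N"
proof -
  have "(f - g) S \<noteq> 0 \<Longrightarrow> f S \<noteq> 0 \<or> g S \<noteq> 0" for S
    by auto
  with assms show ?thesis
    unfolding Mspace_def by blast
qed

lemma mmult_in_Mspace:
  assumes "a \<in> Mspace N" "b \<in> Mspace N"
  shows "mmult a b \<in> Mspace N"
proof -
  have "S \<subseteq> {1..N}" if nonzero: "mmult a b S \<noteq> 0" for S
  proof -
    obtain A B where "a A \<noteq> 0" "b B \<noteq> 0" "A \<union> B = S"
      using nonzero by (rule mmult_nonzeroE)
    with assms show ?thesis
      unfolding Mspace_def by blast
  qed
  then show ?thesis
    unfolding Mspace_def by blast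
qed

lemma sum_in_Mspace:
  assumes "\<And>i. i \<in> X \<Longrightarrow> F i \<in> Mspace N"
  shows "sum F X \<in> Mspace N"
proof -
  have "S \<subseteq> {1..N}" if nonzero: "sum F X S \<noteq> 0" for S
  proof -
    obtain i where "i \<in> X" "F i S \<noteq> 0"
      using nonzero unfolding sum_fun_apply by (meson sum.not_neutral_contains_not_neutral)
    with assms show ?thesis
      unfolding Mspace_def by blast
  qed
  then show ?thesis
    unfolding Mspace_def by blast
qed

lemma Mspace_subset_span_mmono: "Mspace N \<subseteq> mlpoly.span (mmono ` Pow {1..N})"
proof
  fix g assume g: "g \<in> Mspace N"
  have "g = (\<Sum>S\<in>Pow {1..N}. mscale (g S) (mmono S))"
  proof
    fix T
    have "(\<Sum>S\<in>Pow {1..N}. mscale (g S) (mmono S)) T = (\<Sum>S\<in>Pow {1..N}. if S = T then g S else 0)"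
      unfolding sum_fun_apply mscale_def mmono_def by (intro sum.cong refl) auto
    also have "\<dots> = (if T \<in> Pow {1..N} then g T else 0)"
      by (simp only: sum.delta finite_Pow_iff finite_atLeastAtMost)
    also have "\<dots> = g T"
      using g unfolding Mspace_def by (cases "g T = 0") auto
    finally show "g T = (\<Sum>S\<in>Pow {1..N}. mscale (g S) (mmono S)) T"
      by (rule sym)
  qed
  also have "\<dots> \<in> mlpoly.span (mmono ` Pow {1..N})"
    by (intro mlpoly.span_sum mlpoly.span_scale mlpoly.span_base) auto
  finally show "g \<in> mlpoly.span (mmono ` Pow {1..N})" .
qed

lemma dim_Mspace_le: "mlpoly.dim (Mspace N) \<le> 2 ^ N"
proof -
  have "mlpoly.dim (Mspace N) \<le> card (mmono ` Pow {1..N})"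
    by (intro mlpoly.dim_le_card Mspace_subset_span_mmono) auto
  also have "\<dots> \<le> card (Pow {1..N})"
    by (rule card_image_le) simp
  finally show ?thesis
    by (simp add: card_Pow)
qed

lemma card_le_mdeg: "finite {S. f S \<noteq> 0} \<Longrightarrow> f S \<noteq> 0 \<Longrightarrow> card S \<le> mdeg f"
  unfolding mdeg_def by (auto intro: Max_ge)

lemma gen_ideal_subset_Mspace:
  "(\<And>I. I \<in> Ix \<Longrightarrow> f I \<in> Mspace N) \<Longrightarrow> gen_ideal N Ix f \<subseteq> Mspace N"
  unfolding gen_ideal_def by (auto intro!: sum_in_Mspace mmult_in_Mspace)

lemma mmult_in_gen_ideal:
  assumes "finite Ix" "I \<in> Ix" "g \<in> Mspace N"
  shows "mmult g (f I) \<in> gen_ideal N Ix f"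
proof -
  define g' where "g' I' = (if I' = I then g else 0)" for I'
  have "\<forall>I'\<in>Ix. g' I' \<in> Mspace N"
    using assms(3) by (simp add: g'_def Mspace_def)
  moreover have "(\<Sum>I'\<in>Ix. mmult (g' I') (f I')) = mmult g (f I)"
    using assms(1,2) by (simp add: g'_def if_distrib[of "\<lambda>h. mmult h _"] sum.delta cong: if_cong)
  ultimately show ?thesis
    unfolding gen_ideal_def by (intro CollectI exI[of _ g'] conjI) auto
qed

definition has_leading_monomial :: "mlpoly \<Rightarrow> nat set \<Rightarrow> bool" where
  "has_leading_monomial h S \<longleftrightarrow> h S = 1 \<and> (\<forall>T. h T \<noteq> 0 \<longrightarrow> T = S \<or> card T < card S)"

lemma has_leading_monomial_mmult_mmono:
  assumes "finite S" "I \<subseteq> S" and low: "\<And>B. r B \<noteq> 0 \<Longrightarrow> card B < card I"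
  shows "has_leading_monomial (mmult (mmono (S - I)) (mmono I + r)) S"
proof -
  have finI: "finite I"
    using assms(1,2) finite_subset by blast
  have low_product: "card T < card S" if nonzero: "mmult (mmono (S - I)) r T \<noteq> 0" for T
  proof -
    obtain A' B where "mmono (S - I) A' \<noteq> 0" "r B \<noteq> 0" "A' \<union> B = T"
      using nonzero by (rule mmult_nonzeroE)
    then have "r B \<noteq> 0" "(S - I) \<union> B = T"
      by (auto simp: mmono_def split: if_splits)
    then have "card T \<le> card (S - I) + card B" and "card B < card I"
      using card_Un_le low by blast+
    moreover have "card (S - I) + card I = card S"
      using card_mono[OF assms(1,2)] finI assms(2) by (simp add: card_Diff_subset)
    ultimately show ?thesis by linarith
  qed
  then have "mmult (mmono (S - I)) r S = 0"
    by blast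
  moreover have "mmult (mmono (S - I)) (mmono I + r) = mmono S + mmult (mmono (S - I)) r"
    using assms(1,2) finI by (simp add: mmult_add_right mmult_mmono Un_absorb2)
  ultimately show ?thesis
    using low_product unfolding has_leading_monomial_def by (auto simp: mmono_def)
qed

lemma inj_on_leading_monomial:
  assumes "\<And>S. S \<in> A \<Longrightarrow> has_leading_monomial (h S) S"
  shows "inj_on h A"
proof (rule inj_onI)
  fix S S' assume "S \<in> A" "S' \<in> A" "h S = h S'"
  with assms[of S] assms[of S'] have "(S = S' \<or> card S < card S') \<and> (S' = S \<or> card S' < card S)"
    unfolding has_leading_monomial_def by (metis zero_neq_one)
  then show "S = S'" by auto
qed

lemma independent_leading_monomial:
  assumes "finite A" and lead: "\<And>S. S \<in> A \<Longrightarrow> has_leading_monomial (h S) S"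
  shows "mlpoly.independent (h ` A)"
proof
  assume "mlpoly.dependent (h ` A)"
  then obtain u where "\<exists>v\<in>h ` A. u v \<noteq> 0" and sum_u: "(\<Sum>v\<in>h ` A. mscale (u v) v) = 0"
    using mlpoly.dependent_finite assms(1) by blast
  define c where "c S = u (h S)" for S
  have "inj_on h A"
    using lead by (rule inj_on_leading_monomial)
  with sum_u have sum0: "(\<Sum>S\<in>A. mscale (c S) (h S)) = 0"
    by (simp add: c_def sum.reindex)
  have "\<exists>S\<in>A. c S \<noteq> 0"
    using \<open>\<exists>v\<in>h ` A. u v \<noteq> 0\<close> by (auto simp: c_def)
  define C where "C = {S\<in>A. c S \<noteq> 0}"
  have "finite C"
    using assms(1) unfolding C_def by simp
  have "C \<noteq> {}"
    using \<open>\<exists>S\<in>A. c S \<noteq> 0\<close> unfolding C_def by blast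
  have "Max (card ` C) \<in> card ` C"
    using \<open>finite C\<close> \<open>C \<noteq> {}\<close> by (intro Max_in) auto
  then obtain S0 where S0: "S0 \<in> C" "card S0 = Max (card ` C)"
    by (metis imageE)
  have "S0 \<in> A"
    using S0(1) unfolding C_def by blast
  have S0_max: "card S \<le> card S0" if "S \<in> C" for S
    using \<open>finite C\<close> that unfolding S0(2) by simp
  \<comment> \<open>Evaluating at a maximal-degree monomial of the combination isolates a single summand.\<close>
  have other_terms_vanish: "c S * h S S0 = 0" if "S \<in> A - {S0}" for S
  proof (rule ccontr)
    assume "c S * h S S0 \<noteq> 0"
    then have "S \<in> C" "S0 = S \<or> card S0 < card S"
      using that lead[of S] by (auto simp: C_def has_leading_monomial_def)
    with S0_max[of S] that show False
      by auto
  qed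
  have "(\<Sum>S\<in>A - {S0}. c S * h S S0) = 0"
    using other_terms_vanish by (intro sum.neutral) blast
  then have "c S0 * h S0 S0 = (\<Sum>S\<in>A. c S * h S S0)"
    by (simp only: sum.remove[OF assms(1) \<open>S0 \<in> A\<close>] add_0_right)
  also have "\<dots> = 0"
    using fun_cong[OF sum0, of S0] by (simp only: sum_fun_apply mscale_def zero_fun_def)
  finally have "c S0 * h S0 S0 = 0" .
  with S0(1) lead[of S0] show False
    unfolding C_def has_leading_monomial_def by simp
qed

lemma card_large_subsets_plus_small:
  assumes "1 \<le> k"
  shows "card {S. S \<subseteq> {1..N} \<and> k \<le> card S} + (\<Sum>j = 0..k - 1. N choose j) = 2 ^ N"
proof -
  define Small where "Small = {S. S \<subseteq> {1..N} \<and> card S < k}"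
  have "Small = (\<Union>j\<in>{..<k}. {S. S \<subseteq> {1..N} \<and> card S = j})"
    unfolding Small_def by auto
  then have "card Small = (\<Sum>j\<in>{..<k}. card {S. S \<subseteq> {1..N} \<and> card S = j})"
    by (simp only:) (rule card_UN_disjoint, auto)
  also have "\<dots> = (\<Sum>j = 0..k - 1. N choose j)"
    using assms by (intro sum.cong) (auto simp: n_subsets)
  finally have small: "card Small = (\<Sum>j = 0..k - 1. N choose j)" .
  have "Pow {1..N} = {S. S \<subseteq> {1..N} \<and> k \<le> card S} \<union> Small"
    unfolding Small_def by auto
  then have "card (Pow {1..N}) = card {S. S \<subseteq> {1..N} \<and> k \<le> card S} + card Small"
    by (simp only:) (rule card_Un_disjoint, auto simp: Small_def)
  with small show ?thesis
    by (simp add: card_Pow)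
qed

lemma leading_monomial_in_gen_ideal:
  assumes "1 \<le> k" "S \<subseteq> {1..N}" "k \<le> card S"
    and "\<And>I. I \<subseteq> {1..N} \<Longrightarrow> card I = k \<Longrightarrow> f I \<in> Mspace N"
    and "\<And>I. I \<subseteq> {1..N} \<Longrightarrow> card I = k \<Longrightarrow> mdeg (f I - mmono I) \<le> k - 1"
  shows "\<exists>h \<in> gen_ideal N {I. I \<subseteq> {1..N} \<and> card I = k} f. has_leading_monomial h S"
proof -
  obtain I where I: "I \<subseteq> S" "card I = k"
    using assms(3) obtain_subset_with_card_n by blast
  have IN: "I \<subseteq> {1..N}" and finS: "finite S"
    using I assms(2) finite_subset by auto
  have low_in_Mspace: "f I - mmono I \<in> Mspace N"
    using IN I by (simp add: assms(4) mmono_in_Mspace diff_in_Mspace)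
  have "card B < card I" if "(f I - mmono I) B \<noteq> 0" for B
  proof -
    have "card B \<le> mdeg (f I - mmono I)"
      using finite_support_Mspace[OF low_in_Mspace] that by (rule card_le_mdeg)
    then show ?thesis
      using assms(1) assms(5)[OF IN I(2)] I(2) by linarith
  qed
  then have "has_leading_monomial (mmult (mmono (S - I)) (mmono I + (f I - mmono I))) S"
    by (rule has_leading_monomial_mmult_mmono[OF finS I(1)])
  then have "has_leading_monomial (mmult (mmono (S - I)) (f I)) S"
    by simp
  moreover have "mmult (mmono (S - I)) (f I) \<in> gen_ideal N {I. I \<subseteq> {1..N} \<and> card I = k} f"
    using I IN assms(2) by (intro mmult_in_gen_ideal mmono_in_Mspace) auto
  ultimately show ?thesis by blast
qed

theorem lemma2p11:
  fixes N k :: nat and f :: "nat set \<Rightarrow> mlpoly"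
  assumes "1 \<le> k" and "k \<le> N"
    and "\<And>I. I \<subseteq> {1..N} \<Longrightarrow> card I = k \<Longrightarrow> f I \<in> Mspace N"
    and "\<And>I. I \<subseteq> {1..N} \<Longrightarrow> card I = k \<Longrightarrow> mdeg (f I - mmono I) \<le> k - 1"
  shows "quot_dim (Mspace N) (gen_ideal N {I. I \<subseteq> {1..N} \<and> card I = k} f)
           \<le> (\<Sum>j = 0..k - 1. N choose j)"
proof -
  define J where "J = gen_ideal N {I. I \<subseteq> {1..N} \<and> card I = k} f"
  define Large where "Large = {S. S \<subseteq> {1..N} \<and> k \<le> card S}"
  have "finite Large"
    unfolding Large_def by (rule finite_subset[of _ "Pow {1..N}"]) auto
  obtain h where h: "\<And>S. S \<in> Large \<Longrightarrow> h S \<in> J \<and> has_leading_monomial (h S) S"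
    using leading_monomial_in_gen_ideal[OF assms(1) _ _ assms(3,4)]
    unfolding Large_def J_def by (metis (no_types, lifting) mem_Collect_eq)
  have "J \<subseteq> Mspace N"
    unfolding J_def using assms(3) by (intro gen_ideal_subset_Mspace) auto
  then have "card (h ` Large) \<le> mlpoly.dim J"
    using h \<open>finite Large\<close> Mspace_subset_span_mmono
    by (intro mlpoly.independent_card_le_dim_of_finite_span[where W = "mmono ` Pow {1..N}"]
        independent_leading_monomial) auto
  moreover have "card (h ` Large) = card Large"
    using h by (intro card_image inj_on_leading_monomial) auto
  ultimately show ?thesis
    using dim_Mspace_le[of N] card_large_subsets_plus_small[OF assms(1), of N]
    unfolding quot_dim_def J_def Large_def by linarith
qed

end
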